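(* Let $R=[0,1]^2$, $s\in\mathbb{N}$, $u=2^{-s}$, and let $(B_1,B_2)$ be a good box pair. If $\ell,\ell'\in\mathcal{L}$ are two lines traversing $(B_1,B_2)$, then $|\hat{\ell}-\hat{\ell'}|\le4\sqrt u$. In particular, $W=O(\sqrt u)$, where $W$ is the supremum of $|\hat{\ell_c}-\hat{\ell}|$ over all $\ell\in\mathcal{L}$ traversing $(B_1,B_2)$ and $\ell_c$ is the line through $c_1$ and $c_2$.
   Context: For $p,q\in\mathbb{R}^2$ write $p\le q$ if both coordinates satisfy $\le$. $R$ is split into $2^s\times2^s$ congruent closed squares ("boxes") of side length $u$. A box pair is an ordered pair $(B_1,B_2)$ of boxes with centers $c_1,c_2$. Let $\mathcal{L}$ be the set of non-vertical lines in $\mathbb{R}^2$ with positive slope; each has a unit direction vector $a=(a_1,a_2)$ with positive coordinates, and its weight is $\hat{\ell}:=\min\{a_1,a_2\}$. A line $\ell\in\mathcal{L}$ traverses $(B_1,B_2)$ if it meets both boxes. A box pair is null if $c_1\not\le c_2$; close if $c_1\le c_2$ and $\|c_1-c_2\|_2<\sqrt u$; non-diagonal if $c_1\le c_2$, $\|c_1-c_2\|_2\ge\sqrt u$, and every traversing $\ell\in\mathcal{L}$ satisfies $\hat{\ell}<u^{1/5}$; good if it is neither null, close, nor non-diagonal. $O(\sqrt u)$ means bounded by an absolute constant times $\sqrt u$, uniformly over $s$ and good box pairs. *)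

theory Defs
  imports "HOL-Analysis.Analysis"
begin

type_synonym pt = "real \<times> real"

definition cle :: "pt \<Rightarrow> pt \<Rightarrow> bool" where
  "cle p q \<longleftrightarrow> fst p \<le> fst q \<and> snd p \<le> snd q"

definition side :: "nat \<Rightarrow> real" where
  "side s = 1 / 2 ^ s"

text \<open>Box with index (i,j), 0 <= i,j < 2^s, of the grid subdividing R = [0,1]^2.\<close>
definition valid_idx :: "nat \<Rightarrow> nat \<times> nat \<Rightarrow> bool" where
  "valid_idx s b \<longleftrightarrow> fst b < 2 ^ s \<and> snd b < 2 ^ s"

definition box_of :: "nat \<Rightarrow> nat \<times> nat \<Rightarrow> pt set" where
  "box_of s b = {x. real (fst b) * side s \<le> fst x \<and> fst x \<le> (real (fst b) + 1) * side s
                  \<and> real (snd b) * side s \<le> snd x \<and> snd x \<le> (real (snd b) + 1) * side s}"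

definition center :: "nat \<Rightarrow> nat \<times> nat \<Rightarrow> pt" where
  "center s b = ((real (fst b) + 1/2) * side s, (real (snd b) + 1/2) * side s)"

definition line_through :: "pt \<Rightarrow> pt \<Rightarrow> pt set" where
  "line_through p a = {p + t *\<^sub>R a | t. True}"

definition pos_unit :: "pt \<Rightarrow> bool" where
  "pos_unit a \<longleftrightarrow> fst a > 0 \<and> snd a > 0 \<and> norm a = 1"

definition Lines :: "pt set set" where
  "Lines = {line_through p a | p a. pos_unit a}"

text \<open>Weight of a line in L: min of the coordinates of its (unique) positive unit direction.\<close>
definition weight :: "pt set \<Rightarrow> real" where
  "weight l = (THE w. \<exists>p a. l = line_through p a \<and> pos_unit a \<and> w = min (fst a) (snd a))"

definition traverses :: "pt set \<Rightarrow> pt set \<Rightarrow> pt set \<Rightarrow> bool" where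
  "traverses l B1 B2 \<longleftrightarrow> l \<inter> B1 \<noteq> {} \<and> l \<inter> B2 \<noteq> {}"

text \<open>Good box pair: not null, not close, not non-diagonal.\<close>
definition good_pair :: "nat \<Rightarrow> nat \<times> nat \<Rightarrow> nat \<times> nat \<Rightarrow> bool" where
  "good_pair s b1 b2 \<longleftrightarrow> valid_idx s b1 \<and> valid_idx s b2
     \<and> cle (center s b1) (center s b2)
     \<and> dist (center s b1) (center s b2) \<ge> sqrt (side s)
     \<and> \<not> (\<forall>l\<in>Lines. traverses l (box_of s b1) (box_of s b2) \<longrightarrow> weight l < side s powr (1/5))"

definition center_weight :: "nat \<Rightarrow> nat \<times> nat \<Rightarrow> nat \<times> nat \<Rightarrow> real" where
  "center_weight s b1 b2 =
     (let d = center s b2 - center s b1 in min (fst d) (snd d) / norm d)"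

definition Wsup :: "nat \<Rightarrow> nat \<times> nat \<Rightarrow> nat \<times> nat \<Rightarrow> real" where
  "Wsup s b1 b2 = Sup {\<bar>center_weight s b1 b2 - weight l\<bar> | l.
        l \<in> Lines \<and> traverses l (box_of s b1) (box_of s b2)}"

end

theory Submission
  imports Defs
begin

(* A line with unit direction a that meets both boxes passes within u/2 of each centre in
   each coordinate, so the centre difference d lies within distance sqrt 2 * u of the line
   spanned by a. As a and d both point into the positive quadrant and |d| >= sqrt u, this
   forces |a - d/|d|| <= 2 sqrt u. Taking the minimum of the two coordinates is 1-Lipschitz,
   so every traversing line has weight within 2 sqrt u of the weight of l_c. *)

lemma norm_diff_sgn_sq_le:
  fixes a d :: "'a::real_inner"
  assumes unit: "norm a = 1" and acute: "0 \<le> inner a d" and nonzero: "d \<noteq> 0"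
  shows "(norm (a - sgn d))\<^sup>2 \<le> 2 * (norm (d - t *\<^sub>R a))\<^sup>2 / (norm d)\<^sup>2"
proof -
  define k where "k = inner a d"
  define N where "N = norm d"
  have N: "N > 0" using nonzero by (simp add: N_def)
  have kN: "k \<le> N" using norm_cauchy_schwarz[of a d] unit by (simp add: k_def N_def)
  have "(norm (d - t *\<^sub>R a))\<^sup>2 = N\<^sup>2 - 2 * t * k + t\<^sup>2 * (norm a)\<^sup>2"
    unfolding k_def N_def power2_norm_eq_inner
    by (simp add: inner_diff_left inner_diff_right inner_commute algebra_simps power2_eq_square)
  also have "\<dots> = (t - k)\<^sup>2 + (N\<^sup>2 - k\<^sup>2)"
    using unit by (simp add: power2_eq_square algebra_simps)
  finally have dist_line: "N\<^sup>2 - k\<^sup>2 \<le> (norm (d - t *\<^sub>R a))\<^sup>2"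
    by simp
  have "(norm (a - sgn d))\<^sup>2 = (norm a)\<^sup>2 - 2 * k / N + (norm (sgn d))\<^sup>2"
    unfolding k_def N_def power2_norm_eq_inner
    by (simp add: sgn_div_norm inner_diff_left inner_diff_right inner_commute divide_inverse_commute)
  also have "\<dots> = 2 * (N - k) / N"
    using unit nonzero N by (simp add: norm_sgn field_simps)
  also have "\<dots> = 2 * (N - k) * N / N\<^sup>2"
    using N by (simp add: power2_eq_square)
  also have "\<dots> \<le> 2 * (N - k) * (N + k) / N\<^sup>2"
    using acute kN by (intro divide_right_mono mult_left_mono) (auto simp: k_def)
  also have "\<dots> = 2 * (N\<^sup>2 - k\<^sup>2) / N\<^sup>2"
    by (simp add: power2_eq_square algebra_simps)
  also have "\<dots> \<le> 2 * (norm (d - t *\<^sub>R a))\<^sup>2 / N\<^sup>2"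
    using dist_line by (simp add: divide_right_mono)
  finally show ?thesis by (simp add: N_def)
qed

lemma line_through_pos_unit_dir_unique:
  assumes "line_through p a = line_through q b" "pos_unit a" "pos_unit b"
  shows "a = b"
proof -
  have "p \<in> line_through p a" "p + a \<in> line_through p a"
    unfolding line_through_def by (auto intro: exI[of _ 0] exI[of _ 1])
  then have on_q: "p \<in> line_through q b" "p + a \<in> line_through q b"
    using assms(1) by simp_all
  obtain t1 where "p = q + t1 *\<^sub>R b"
    using on_q(1) unfolding line_through_def by blast
  moreover obtain t2 where "p + a = q + t2 *\<^sub>R b"
    using on_q(2) unfolding line_through_def by blast
  ultimately have ab: "a = (t2 - t1) *\<^sub>R b" by (simp add: algebra_simps)
  then have "fst a = (t2 - t1) * fst b" by simp
  then have "t2 - t1 > 0" using assms(2,3) unfolding pos_unit_def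
    by (simp add: zero_less_mult_iff)
  moreover have "norm a = \<bar>t2 - t1\<bar> * norm b" using ab by simp
  ultimately have "t2 - t1 = 1" using assms(2,3) unfolding pos_unit_def by simp
  then show ?thesis using ab by simp
qed

lemma weight_line_through:
  "pos_unit a \<Longrightarrow> weight (line_through p a) = min (fst a) (snd a)"
  unfolding weight_def by (rule the_equality) (use line_through_pos_unit_dir_unique in blast)+

lemma side_pos: "side s > 0"
  unfolding side_def by simp

lemma box_of_near_center:
  assumes "x \<in> box_of s b"
  shows "\<bar>fst x - fst (center s b)\<bar> \<le> side s / 2" "\<bar>snd x - snd (center s b)\<bar> \<le> side s / 2"
  using assms unfolding box_of_def center_def by (auto simp: algebra_simps split: abs_split)

lemma box_of_diff_near_center_diff:
  assumes "x \<in> box_of s b1" "y \<in> box_of s b2"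
  shows "(norm ((center s b2 - center s b1) - (y - x)))\<^sup>2 \<le> 2 * (side s)\<^sup>2"
proof -
  define e where "e = (center s b2 - center s b1) - (y - x)"
  have "\<bar>fst e\<bar> \<le> side s" "\<bar>snd e\<bar> \<le> side s"
    using box_of_near_center[OF assms(1)] box_of_near_center[OF assms(2)]
    unfolding e_def fst_diff snd_diff abs_le_iff by (intro conjI; linarith)+
  then have "(fst e)\<^sup>2 \<le> (side s)\<^sup>2" "(snd e)\<^sup>2 \<le> (side s)\<^sup>2"
    by (metis abs_le_square_iff abs_of_pos side_pos)+
  then show ?thesis
    unfolding e_def[symmetric] by (simp add: norm_prod_def)
qed

lemma good_pair_traversing_direction:
  assumes g: "good_pair s b1 b2" and a: "pos_unit a"
    and tr: "traverses (line_through p a) (box_of s b1) (box_of s b2)"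
  shows "norm (a - sgn (center s b2 - center s b1)) \<le> 2 * sqrt (side s)"
proof -
  define u where "u = side s"
  define d where "d = center s b2 - center s b1"
  have u: "u > 0" using side_pos by (simp add: u_def)
  obtain t1 t2 where x: "p + t1 *\<^sub>R a \<in> box_of s b1" "p + t2 *\<^sub>R a \<in> box_of s b2"
    using tr unfolding traverses_def line_through_def by auto
  have dist_line: "(norm (d - (t2 - t1) *\<^sub>R a))\<^sup>2 \<le> 2 * u\<^sup>2"
    using box_of_diff_near_center_diff[OF x] by (simp add: d_def u_def algebra_simps)
  have "sqrt u \<le> norm d"
    using g unfolding good_pair_def d_def u_def by (simp add: dist_norm norm_minus_commute)
  then have "(sqrt u)\<^sup>2 \<le> (norm d)\<^sup>2"
    using u by (intro power_mono) auto
  then have d_large: "u \<le> (norm d)\<^sup>2"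
    using u by simp
  have "norm a = 1" "d \<noteq> 0"
    using a d_large u unfolding pos_unit_def by auto
  moreover have "0 \<le> inner a d"
    using g a unfolding good_pair_def cle_def pos_unit_def d_def by (simp add: inner_prod_def)
  ultimately have "(norm (a - sgn d))\<^sup>2 \<le> 2 * (norm (d - (t2 - t1) *\<^sub>R a))\<^sup>2 / (norm d)\<^sup>2"
    by (intro norm_diff_sgn_sq_le)
  also have "\<dots> \<le> 4 * u * (u / (norm d)\<^sup>2)"
    using dist_line by (simp add: divide_right_mono power2_eq_square)
  also have "\<dots> \<le> 4 * u"
    using u d_large by (intro mult_left_le) (auto simp: divide_le_eq_1)
  finally have "norm (a - sgn d) \<le> sqrt (4 * u)"
    by (rule real_le_rsqrt)
  then show ?thesis
    by (simp add: real_sqrt_mult d_def u_def)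
qed

lemma center_weight_sgn:
  "center_weight s b1 b2 = (let v = sgn (center s b2 - center s b1) in min (fst v) (snd v))"
  unfolding center_weight_def Let_def sgn_div_norm
  by (simp add: min_divide_distrib_right divide_inverse_commute min_mult_distrib_left)

lemma abs_fst_snd_le_norm:
  fixes x :: "real \<times> real"
  shows "\<bar>fst x\<bar> \<le> norm x" "\<bar>snd x\<bar> \<le> norm x"
  by (metis norm_fst_le prod.collapse real_norm_def) (metis norm_snd_le prod.collapse real_norm_def)

lemma abs_min_diff_le:
  fixes x1 x2 y1 y2 :: real
  shows "\<bar>x1 - y1\<bar> \<le> r \<Longrightarrow> \<bar>x2 - y2\<bar> \<le> r \<Longrightarrow> \<bar>min x1 x2 - min y1 y2\<bar> \<le> r"
  by (auto simp: min_def abs_le_iff)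

lemma weight_near_center_weight:
  assumes g: "good_pair s b1 b2" and l: "l \<in> Lines"
    and tr: "traverses l (box_of s b1) (box_of s b2)"
  shows "\<bar>weight l - center_weight s b1 b2\<bar> \<le> 2 * sqrt (side s)"
proof -
  define v where "v = sgn (center s b2 - center s b1)"
  obtain p a where la: "l = line_through p a" and a: "pos_unit a"
    using l unfolding Lines_def by auto
  have "norm (a - v) \<le> 2 * sqrt (side s)"
    using good_pair_traversing_direction[OF g a] tr by (simp add: la v_def)
  then have "\<bar>fst a - fst v\<bar> \<le> 2 * sqrt (side s)" "\<bar>snd a - snd v\<bar> \<le> 2 * sqrt (side s)"
    using abs_fst_snd_le_norm[of "a - v"] by auto
  moreover have "weight l = min (fst a) (snd a)"
    using weight_line_through[OF a] by (simp add: la)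
  moreover have "center_weight s b1 b2 = min (fst v) (snd v)"
    by (simp add: center_weight_sgn Let_def v_def)
  ultimately show ?thesis
    by (simp add: abs_min_diff_le)
qed

theorem lemma8:
  shows "(\<forall>s b1 b2 l l'. good_pair s b1 b2 \<longrightarrow> l \<in> Lines \<longrightarrow> l' \<in> Lines
            \<longrightarrow> traverses l (box_of s b1) (box_of s b2)
            \<longrightarrow> traverses l' (box_of s b1) (box_of s b2)
            \<longrightarrow> \<bar>weight l - weight l'\<bar> \<le> 4 * sqrt (side s))
       \<and> (\<exists>C. \<forall>s b1 b2. good_pair s b1 b2 \<longrightarrow> Wsup s b1 b2 \<le> C * sqrt (side s))"
proof (intro conjI allI impI exI)
  fix s b1 b2 l l'
  assume "good_pair s b1 b2" "l \<in> Lines" "l' \<in> Lines"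
    "traverses l (box_of s b1) (box_of s b2)" "traverses l' (box_of s b1) (box_of s b2)"
  then have "\<bar>weight l - center_weight s b1 b2\<bar> \<le> 2 * sqrt (side s)"
    "\<bar>weight l' - center_weight s b1 b2\<bar> \<le> 2 * sqrt (side s)"
    using weight_near_center_weight by blast+
  then show "\<bar>weight l - weight l'\<bar> \<le> 4 * sqrt (side s)"
    by linarith
next
  fix s b1 b2
  assume g: "good_pair s b1 b2"
  \<comment> \<open>The non-diagonal exclusion guarantees a traversing line, so the supremum is not the junk value of an empty set.\<close>
  then have "\<exists>l. l \<in> Lines \<and> traverses l (box_of s b1) (box_of s b2)"
    unfolding good_pair_def by auto
  then show "Wsup s b1 b2 \<le> 2 * sqrt (side s)"
    unfolding Wsup_def using weight_near_center_weight[OF g]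
    by (intro cSup_least) (auto simp: abs_minus_commute)
qed

end
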